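(* Let $\alpha>0$, let $\mathscr{K}$ be a convex feasible functional, and consider the augmented dual ascent scheme $$x^{n+1} = \operatorname{arg\,min}_{x} \mathscr{K}(x)+\langle x,\Lambda^n\rangle +\frac{\alpha}{2}\|x\|^2,\qquad \Lambda^{n+1} = \Lambda^{n} + \alpha\mathcal{P}_{\mathcal{M}^\perp}(x^{n+1}),\qquad \Lambda^0=0.$$ Define $\mathscr{J}(x)=\mathscr{K}(x)+\frac{\alpha}{2}\|\mathcal{P}_{\mathcal{M}}x\|^2$ and $h:\mathcal{H}\to\mathbb{R}$ by $h(\Lambda)=\min_x \mathscr{J}(x)+\langle x,\mathcal{P}_{\mathcal{M}^\perp}\Lambda\rangle=-\mathscr{J}^*(-\mathcal{P}_{\mathcal{M}^\perp}\Lambda)$. If $h$ attains its supremum, then $(\Lambda^{n})_{n=1}^\infty$ is a bounded sequence. In particular, this happens if $\mathscr{K}$ is a feasible finite-valued functional.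
   Context: $\mathcal{H}$ is a finite dimensional Hilbert space, $\mathcal{M}\subset\mathcal{H}$ a linear subspace, $\mathcal{P}_{\mathcal{M}}$, $\mathcal{P}_{\mathcal{M}^\perp}$ the orthogonal projections onto $\mathcal{M}$, $\mathcal{M}^\perp$. $\mathscr{J}^*$ denotes the Fenchel conjugate. A functional is called feasible if it is lower semi-continuous, proper, bounded below, and satisfies $\lim_{\|x\|\rightarrow\infty}\mathscr{K}(x)/\|x\|=\infty$. *)

theory Defs
  imports "HOL-Analysis.Analysis"
begin

definition orth_comp :: "'a::real_inner set \<Rightarrow> 'a set" where
  "orth_comp M = {y. \<forall>z\<in>M. inner y z = 0}"

definition orth_proj :: "'a::real_inner set \<Rightarrow> 'a \<Rightarrow> 'a" where
  "orth_proj M x = (THE y. y \<in> M \<and> (\<forall>z\<in>M. inner (x - y) z = 0))"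

definition lsc_fun :: "('a::topological_space \<Rightarrow> ereal) \<Rightarrow> bool" where
  "lsc_fun K \<longleftrightarrow> (\<forall>x s. s \<longlonglongrightarrow> x \<longrightarrow> K x \<le> liminf (\<lambda>n. K (s n)))"

definition proper_fun :: "('a \<Rightarrow> ereal) \<Rightarrow> bool" where
  "proper_fun K \<longleftrightarrow> (\<forall>x. K x \<noteq> -\<infinity>) \<and> (\<exists>x. K x \<noteq> \<infinity>)"

definition bounded_below_fun :: "('a \<Rightarrow> ereal) \<Rightarrow> bool" where
  "bounded_below_fun K \<longleftrightarrow> (\<exists>c::real. \<forall>x. ereal c \<le> K x)"

text \<open>lim_{||x|| -> infinity} K(x)/||x|| = infinity, unfolded.\<close>
definition superlinear_fun :: "('a::real_normed_vector \<Rightarrow> ereal) \<Rightarrow> bool" where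
  "superlinear_fun K \<longleftrightarrow> (\<forall>C::real. \<exists>R::real. \<forall>x. R \<le> norm x \<longrightarrow> ereal (C * norm x) \<le> K x)"

definition feasible :: "('a::real_normed_vector \<Rightarrow> ereal) \<Rightarrow> bool" where
  "feasible K \<longleftrightarrow> lsc_fun K \<and> proper_fun K \<and> bounded_below_fun K \<and> superlinear_fun K"

definition convex_fun :: "('a::real_vector \<Rightarrow> ereal) \<Rightarrow> bool" where
  "convex_fun K \<longleftrightarrow> (\<forall>x y (t::real). 0 \<le> t \<and> t \<le> 1 \<longrightarrow>
      K ((1 - t) *\<^sub>R x + t *\<^sub>R y) \<le> ereal (1 - t) * K x + ereal t * K y)"

definition dual_h :: "('a::real_inner \<Rightarrow> ereal) \<Rightarrow> real \<Rightarrow> 'a set \<Rightarrow> 'a \<Rightarrow> ereal" where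
  "dual_h K \<alpha> M \<Lambda> = (INF x. K x + ereal (\<alpha> / 2 * (norm (orth_proj M x))\<^sup>2
                                    + inner x (orth_proj (orth_comp M) \<Lambda>)))"

end

theory Submission
  imports Defs
begin

text \<open>
  The optimality condition for the primal step, combined with the convexity of
  |P_M x|^2, shows that x_{n+1} minimizes the Lagrangian J(x) + <x, Lambda_{n+1}>,
  so h(Lambda_{n+1}) is attained at x_{n+1}. Comparing with a maximizer L of h
  (which may be taken in the orthogonal complement of M) gives
  <P_{M^perp} x_{n+1}, L - Lambda_{n+1}> >= 0, i.e. |Lambda_{n+1} - L| <= |Lambda_n - L|:
  the multipliers never leave the ball of radius |L| around L.

  For finite-valued K a maximizer exists by strong duality: always h <= inf_M J,
  and separating M x (-infinity, inf_M J) from the epigraph of J yields L in the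
  orthogonal complement of M with h(L) >= inf_M J.
\<close>

lemma orth_proj_ex1:
  fixes S :: "'a::euclidean_space set"
  assumes "subspace S"
  shows "\<exists>!y. y \<in> S \<and> (\<forall>z\<in>S. inner (x - y) z = 0)"
proof -
  obtain y z where y: "y \<in> span S" and z: "\<And>w. w \<in> span S \<Longrightarrow> orthogonal z w"
    and xyz: "x = y + z"
    using orthogonal_subspace_decomp_exists by blast
  have span_S: "span S = S" using assms by (simp add: span_eq_iff)
  have y_ok: "y \<in> S \<and> (\<forall>w\<in>S. inner (x - y) w = 0)"
    using y z[unfolded span_S orthogonal_def] xyz unfolding span_S by simp
  show ?thesis
  proof (rule ex1I[of _ y])
    fix y' assume y': "y' \<in> S \<and> (\<forall>w\<in>S. inner (x - y') w = 0)"
    then have "y - y' \<in> S" using y_ok assms by (simp add: subspace_diff)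
    then have "inner (x - y') (y - y') = 0" "inner (x - y) (y - y') = 0" using y' y_ok by auto
    then have "inner (y - y') (y - y') = 0"
      by (simp add: inner_diff_left inner_diff_right inner_commute)
    then show "y' = y" by simp
  qed (fact y_ok)
qed

lemma orth_proj_in:
  fixes S :: "'a::euclidean_space set"
  assumes "subspace S"
  shows "orth_proj S x \<in> S"
  using theI'[OF orth_proj_ex1[OF assms, of x]] unfolding orth_proj_def by blast

lemma orth_proj_orthogonal:
  fixes S :: "'a::euclidean_space set"
  assumes "subspace S" "z \<in> S"
  shows "inner (x - orth_proj S x) z = 0"
  using theI'[OF orth_proj_ex1[OF assms(1), of x]] assms(2) unfolding orth_proj_def by blast

lemma orth_proj_unique:
  fixes S :: "'a::euclidean_space set"
  assumes "subspace S" "y \<in> S" "\<And>z. z \<in> S \<Longrightarrow> inner (x - y) z = 0"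
  shows "orth_proj S x = y"
  unfolding orth_proj_def
  by (rule the1_equality[OF orth_proj_ex1[OF assms(1)]]) (use assms(2,3) in blast)

lemma orth_proj_id:
  fixes S :: "'a::euclidean_space set"
  assumes "subspace S" "z \<in> S"
  shows "orth_proj S z = z"
  using orth_proj_unique[OF assms] by simp

lemma subspace_orth_comp: "subspace (orth_comp M)"
  unfolding subspace_def orth_comp_def by (auto simp: inner_add_left)

lemma orth_proj_orth_comp:
  fixes M :: "'a::euclidean_space set"
  assumes "subspace M"
  shows "orth_proj (orth_comp M) x = x - orth_proj M x"
proof (rule orth_proj_unique[OF subspace_orth_comp])
  show "x - orth_proj M x \<in> orth_comp M"
    using orth_proj_orthogonal[OF assms] unfolding orth_comp_def by blast
  fix z assume "z \<in> orth_comp M"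
  then have "inner z (orth_proj M x) = 0"
    using orth_proj_in[OF assms] unfolding orth_comp_def by blast
  then show "inner (x - (x - orth_proj M x)) z = 0" by (simp add: inner_commute)
qed

lemma linear_orth_proj:
  fixes M :: "'a::euclidean_space set"
  assumes M: "subspace M"
  shows "linear (orth_proj M)"
proof
  let ?P = "orth_proj M"
  fix x y :: 'a and c :: real
  show "?P (x + y) = ?P x + ?P y"
  proof (rule orth_proj_unique[OF M])
    show "?P x + ?P y \<in> M" using orth_proj_in[OF M] M by (simp add: subspace_add)
    fix z assume "z \<in> M"
    then have "inner (x - ?P x) z + inner (y - ?P y) z = 0"
      using orth_proj_orthogonal[OF M] by simp
    then show "inner (x + y - (?P x + ?P y)) z = 0"
      by (simp add: inner_diff_left inner_add_left)
  qed
  show "?P (c *\<^sub>R x) = c *\<^sub>R ?P x"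
  proof (rule orth_proj_unique[OF M])
    show "c *\<^sub>R ?P x \<in> M" using orth_proj_in[OF M] M by (simp add: subspace_scale)
    fix z assume "z \<in> M"
    then have "c * inner (x - ?P x) z = 0"
      using orth_proj_orthogonal[OF M] by simp
    then show "inner (c *\<^sub>R x - c *\<^sub>R ?P x) z = 0"
      by (simp add: inner_diff_left)
  qed
qed

lemma inner_orth_proj_orth_proj:
  fixes M :: "'a::euclidean_space set"
  assumes "subspace M"
  shows "inner (orth_proj M x) (orth_proj M y) = inner (orth_proj M x) y"
  using orth_proj_orthogonal[OF assms orth_proj_in[OF assms], of y x]
  by (simp add: inner_diff_left inner_diff_right inner_commute)

lemma orth_comp_if_inner_bounded_above:
  fixes a :: "'a::real_inner"
  assumes "subspace M" "\<And>m. m \<in> M \<Longrightarrow> inner a m \<le> c"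
  shows "a \<in> orth_comp M"
  unfolding orth_comp_def
proof (intro CollectI ballI)
  fix m assume m: "m \<in> M"
  show "inner a m = 0"
  proof (rule ccontr)
    assume ne: "inner a m \<noteq> 0"
    define l where "l = (\<bar>c\<bar> + 1) / inner a m"
    have "inner a (l *\<^sub>R m) = \<bar>c\<bar> + 1" using ne by (simp add: l_def)
    moreover have "l *\<^sub>R m \<in> M" using m assms(1) by (simp add: subspace_scale)
    ultimately show False using assms(2) by fastforce
  qed
qed

lemma power2_norm_ge_tangent:
  fixes u v :: "'a::real_inner"
  shows "(norm v)\<^sup>2 + 2 * inner v (u - v) \<le> (norm u)\<^sup>2"
proof -
  have "0 \<le> inner (u - v) (u - v)" by simp
  then show ?thesis
    by (simp add: power2_norm_eq_inner inner_diff_left inner_diff_right inner_commute)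
qed

lemma norm_diff_le_if_inner_nonpos:
  fixes u v w :: "'a::real_inner"
  assumes "inner (v - u) (v - w) \<le> 0"
  shows "norm (v - w) \<le> norm (u - w)"
proof -
  have "(norm (v - w))\<^sup>2 + 2 * inner (v - w) (u - v) \<le> (norm (u - w))\<^sup>2"
    using power2_norm_ge_tangent[of "v - w" "u - w"] by simp
  moreover have "inner (v - w) (u - v) = - inner (v - u) (v - w)"
    by (simp add: inner_commute inner_diff_left inner_diff_right)
  ultimately have "(norm (v - w))\<^sup>2 \<le> (norm (u - w))\<^sup>2" using assms by linarith
  then show ?thesis by (simp add: power2_le_iff_abs_le)
qed

lemma nonneg_if_nonneg_plus_small_multiples:
  fixes c k :: real
  assumes "\<And>t. 0 < t \<Longrightarrow> t \<le> 1 \<Longrightarrow> 0 \<le> c + t * k"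
  shows "0 \<le> c"
proof (rule tendsto_lowerbound)
  have "((\<lambda>t. c + t * k) \<longlongrightarrow> c + 0 * k) (at_right 0)"
    by (intro tendsto_intros)
  then show "((\<lambda>t. c + t * k) \<longlongrightarrow> c) (at_right 0)" by simp
  show "\<forall>\<^sub>F t in at_right 0. 0 \<le> c + t * k"
    unfolding eventually_at_right_field using assms by (intro exI[of _ 1]) auto
qed simp

lemma nonneg_slope_if_bounded_below_threshold:
  fixes \<beta> b v :: real
  assumes bound: "\<And>r. r < v \<Longrightarrow> \<beta> * r \<le> b"
  shows "0 \<le> \<beta>" and "\<beta> * v \<le> b"
proof -
  show "0 \<le> \<beta>"
  proof (rule ccontr)
    assume "\<not> 0 \<le> \<beta>"
    define r where "r = min (v - 1) ((b + 1) / \<beta>)"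
    have "\<beta> * ((b + 1) / \<beta>) \<le> \<beta> * r"
      using \<open>\<not> 0 \<le> \<beta>\<close> by (intro mult_left_mono_neg) (auto simp: r_def)
    with \<open>\<not> 0 \<le> \<beta>\<close> have "b + 1 \<le> \<beta> * r" by simp
    moreover have "r < v" by (simp add: r_def)
    ultimately show False using bound by fastforce
  qed
  have "((\<lambda>r. \<beta> * r) \<longlongrightarrow> \<beta> * v) (at_left v)"
    by (intro tendsto_intros)
  moreover have "\<forall>\<^sub>F r in at_left v. \<beta> * r \<le> b"
    unfolding eventually_at_left_field using bound by (intro exI[of _ "v - 1"]) auto
  ultimately show "\<beta> * v \<le> b"
    by (rule tendsto_upperbound) simp
qed

lemma power2_norm_convex_combination_le:
  fixes a b :: "'a::real_inner"
  assumes "0 \<le> t" "t \<le> 1"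
  shows "(norm ((1 - t) *\<^sub>R a + t *\<^sub>R b))\<^sup>2 \<le> (1 - t) * (norm a)\<^sup>2 + t * (norm b)\<^sup>2"
proof -
  have "(1 - t) * (norm a)\<^sup>2 + t * (norm b)\<^sup>2 - (norm ((1 - t) *\<^sub>R a + t *\<^sub>R b))\<^sup>2
      = t * (1 - t) * (norm (a - b))\<^sup>2"
    by (simp add: power2_norm_eq_inner inner_add_left inner_add_right inner_diff_left
        inner_diff_right inner_commute) (simp add: algebra_simps power2_eq_square)
  moreover have "0 \<le> t * (1 - t) * (norm (a - b))\<^sup>2" using assms by simp
  ultimately show ?thesis by linarith
qed

lemma convex_on_power2_norm_linear:
  fixes f :: "'a::real_vector \<Rightarrow> 'b::real_inner"
  assumes "linear f"
  shows "convex_on UNIV (\<lambda>x. (norm (f x))\<^sup>2)"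
proof (rule convex_onI)
  fix t :: real and x y
  assume "0 < t" "t < 1"
  then show "(norm (f ((1 - t) *\<^sub>R x + t *\<^sub>R y)))\<^sup>2 \<le> (1 - t) * (norm (f x))\<^sup>2 + t * (norm (f y))\<^sup>2"
    using power2_norm_convex_combination_le[of t "f x" "f y"]
    by (simp add: linear_add[OF assms] linear_scale[OF assms])
qed simp

lemma convex_on_real_of_ereal_convex_fun:
  assumes "convex_fun K" "\<And>z. \<bar>K z\<bar> \<noteq> \<infinity>"
  shows "convex_on UNIV (\<lambda>z. real_of_ereal (K z))"
proof (rule convex_onI)
  fix t :: real and x y
  assume "0 < t" "t < 1"
  then have "K ((1 - t) *\<^sub>R x + t *\<^sub>R y) \<le> ereal (1 - t) * K x + ereal t * K y"
    using assms(1) unfolding convex_fun_def by simp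
  moreover have "K z = ereal (real_of_ereal (K z))" for z
    using assms(2)[of z] by (cases "K z") auto
  ultimately have "ereal (real_of_ereal (K ((1 - t) *\<^sub>R x + t *\<^sub>R y)))
      \<le> ereal ((1 - t) * real_of_ereal (K x) + t * real_of_ereal (K y))"
    by (metis times_ereal.simps(1) plus_ereal.simps(1))
  then show "real_of_ereal (K ((1 - t) *\<^sub>R x + t *\<^sub>R y))
      \<le> (1 - t) * real_of_ereal (K x) + t * real_of_ereal (K y)"
    by simp
qed simp

lemma subspace_multiplier_exists:
  fixes J :: "'a::euclidean_space \<Rightarrow> real"
  assumes M: "subspace M" and J_convex: "convex_on UNIV J" and J_bdd: "bdd_below (J ` M)"
  shows "\<exists>L\<in>orth_comp M. \<forall>z. Inf (J ` M) \<le> J z + inner z L"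
proof -
  define v where "v = Inf (J ` M)"
  have M0: "0 \<in> M" using M by (rule subspace_0)
  have v_le: "v \<le> J m" if "m \<in> M" for m
    using J_bdd that unfolding v_def by (simp add: cInf_lower)
  define S where "S = M \<times> {..<v}"
  have "convex S" unfolding S_def by (intro convex_Times subspace_imp_convex[OF M]) simp
  moreover have "convex (epigraph UNIV J)" using J_convex by (simp add: convex_epigraph)
  moreover have "(0, v - 1) \<in> S" using M0 by (simp add: S_def)
  moreover have "(0, J 0) \<in> epigraph UNIV J" by (simp add: mem_epigraph)
  moreover have "S \<inter> epigraph UNIV J = {}" using v_le by (force simp: S_def mem_epigraph)
  ultimately obtain p b where "p \<noteq> 0" and sep_S: "\<forall>q\<in>S. inner p q \<le> b"
    and sep_epigraph: "\<forall>q\<in>epigraph UNIV J. b \<le> inner p q"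
    using separating_hyperplane_sets[of S "epigraph UNIV J"] by blast
  obtain a \<beta> where p: "p = (a, \<beta>)" by (cases p)
  have below_S: "inner a m + \<beta> * r \<le> b" if "m \<in> M" "r < v" for m r
    using sep_S that by (auto simp: S_def p)
  have above_epigraph: "b \<le> inner a z + \<beta> * J z" for z
    using bspec[OF sep_epigraph, of "(z, J z)"] by (simp add: p mem_epigraph)
  have a_orth: "a \<in> orth_comp M"
    using below_S[of _ "v - 1"]
    by (intro orth_comp_if_inner_bounded_above[OF M, where c = "b - \<beta> * (v - 1)"]) fastforce
  have slope: "\<beta> * r \<le> b" if "r < v" for r using below_S[OF M0 that] by simp
  note \<beta>_nonneg = nonneg_slope_if_bounded_below_threshold(1)[of v \<beta> b, OF slope]
    and \<beta>v = nonneg_slope_if_bounded_below_threshold(2)[of v \<beta> b, OF slope]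
  have "\<beta> \<noteq> 0"
  proof
    assume "\<beta> = 0"
    then have "inner (- a) z \<le> - b" for z using above_epigraph[of z] by simp
    then have "- a \<in> orth_comp UNIV" by (intro orth_comp_if_inner_bounded_above[where c = "- b"]) auto
    then have "a = 0" unfolding orth_comp_def by simp
    with \<open>p \<noteq> 0\<close> \<open>\<beta> = 0\<close> show False by (simp add: p zero_prod_def)
  qed
  with \<beta>_nonneg have \<beta>_pos: "0 < \<beta>" by simp
  define L where "L = (1 / \<beta>) *\<^sub>R a"
  have "L \<in> orth_comp M"
    unfolding L_def using a_orth by (simp add: subspace_scale[OF subspace_orth_comp])
  moreover have "v \<le> J z + inner z L" for z
  proof -
    have "\<beta> * v \<le> \<beta> * (J z + inner z L)"
      using \<beta>v above_epigraph[of z] \<beta>_pos by (simp add: L_def inner_commute algebra_simps)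
    then show ?thesis using \<beta>_pos by simp
  qed
  ultimately show ?thesis unfolding v_def by blast
qed

definition lagrangian :: "('a::real_inner \<Rightarrow> ereal) \<Rightarrow> real \<Rightarrow> 'a set \<Rightarrow> 'a \<Rightarrow> 'a \<Rightarrow> ereal" where
  "lagrangian K \<alpha> M \<Lambda> x = K x + ereal (\<alpha> / 2 * (norm (orth_proj M x))\<^sup>2 + inner x \<Lambda>)"

lemma dual_h_eq_INF_lagrangian:
  "dual_h K \<alpha> M \<Lambda> = (INF x. lagrangian K \<alpha> M (orth_proj (orth_comp M) \<Lambda>) x)"
  unfolding dual_h_def lagrangian_def ..

lemma dual_h_le_lagrangian_feasible:
  fixes K :: "'a::euclidean_space \<Rightarrow> ereal"
  assumes "subspace M" "m \<in> M"
  shows "dual_h K \<alpha> M \<Lambda> \<le> lagrangian K \<alpha> M 0 m"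
proof -
  have "orth_proj (orth_comp M) \<Lambda> \<in> orth_comp M" by (rule orth_proj_in[OF subspace_orth_comp])
  then have "inner m (orth_proj (orth_comp M) \<Lambda>) = 0"
    using assms(2) unfolding orth_comp_def by (simp add: inner_commute)
  then have "lagrangian K \<alpha> M (orth_proj (orth_comp M) \<Lambda>) m = lagrangian K \<alpha> M 0 m"
    by (simp add: lagrangian_def)
  moreover have "dual_h K \<alpha> M \<Lambda> \<le> lagrangian K \<alpha> M (orth_proj (orth_comp M) \<Lambda>) m"
    unfolding dual_h_eq_INF_lagrangian by (rule INF_lower) simp
  ultimately show ?thesis by simp
qed

lemma dual_h_attains_max:
  fixes K :: "'a::euclidean_space \<Rightarrow> ereal"
  assumes M: "subspace M" and \<alpha>: "0 \<le> \<alpha>" and K_convex: "convex_fun K"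
    and K_bounded_below: "bounded_below_fun K" and K_finite: "\<And>z. \<bar>K z\<bar> \<noteq> \<infinity>"
  shows "\<exists>\<Lambda>\<^sub>0. \<forall>\<Lambda>'. dual_h K \<alpha> M \<Lambda>' \<le> dual_h K \<alpha> M \<Lambda>\<^sub>0"
proof -
  define J where "J z = real_of_ereal (K z) + \<alpha> / 2 * (norm (orth_proj M z))\<^sup>2" for z
  have lagrangian_eq: "lagrangian K \<alpha> M \<Lambda> z = ereal (J z + inner z \<Lambda>)" for \<Lambda> z
    using K_finite[of z] by (cases "K z") (simp_all add: lagrangian_def J_def)
  obtain c where c: "\<And>z. ereal c \<le> K z"
    using K_bounded_below unfolding bounded_below_fun_def by blast
  have "convex_on UNIV J"
    unfolding J_def using \<alpha> convex_on_real_of_ereal_convex_fun[OF K_convex K_finite]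
      convex_on_power2_norm_linear[OF linear_orth_proj[OF M]]
    by (intro convex_on_add convex_on_cmul) auto
  moreover have J_bdd: "bdd_below (J ` M)"
  proof (rule bdd_belowI2)
    fix z
    have "c \<le> real_of_ereal (K z)" using c[of z] K_finite[of z] by (cases "K z") auto
    then show "c \<le> J z" unfolding J_def using \<alpha> by (simp add: add_increasing2)
  qed
  ultimately obtain L where L: "L \<in> orth_comp M" and L_mult: "\<And>z. Inf (J ` M) \<le> J z + inner z L"
    using subspace_multiplier_exists[OF M] by blast
  have "ereal (Inf (J ` M)) \<le> dual_h K \<alpha> M L"
    unfolding dual_h_eq_INF_lagrangian orth_proj_id[OF subspace_orth_comp L] lagrangian_eq
    using L_mult by (intro INF_greatest) simp
  moreover have "dual_h K \<alpha> M \<Lambda>' \<le> ereal (Inf (J ` M))" for \<Lambda>'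
  proof -
    have "dual_h K \<alpha> M \<Lambda>' \<le> ereal (J m)" if "m \<in> M" for m
      using dual_h_le_lagrangian_feasible[OF M that, where K = K and \<alpha> = \<alpha> and \<Lambda> = \<Lambda>']
      by (simp add: lagrangian_eq)
    then have "dual_h K \<alpha> M \<Lambda>' \<le> (INF m\<in>M. ereal (J m))" by (rule INF_greatest)
    also have "\<dots> = ereal (Inf (J ` M))"
    proof -
      have "J ` M \<noteq> {}" using subspace_0[OF M] by blast
      then show ?thesis using ereal_Inf'[OF J_bdd] by (simp add: image_image)
    qed
    finally show ?thesis .
  qed
  ultimately show ?thesis by (meson order_trans)
qed

lemma prox_minimizer_variational_ineq:
  fixes K :: "'a::real_inner \<Rightarrow> ereal"
  assumes K_convex: "convex_fun K" and Kx: "K x = ereal a" and K_not_MInf: "\<And>y. K y \<noteq> -\<infinity>"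
    and x_min: "\<And>y. K x + ereal (inner x \<mu> + \<alpha> / 2 * (norm x)\<^sup>2)
                    \<le> K y + ereal (inner y \<mu> + \<alpha> / 2 * (norm y)\<^sup>2)"
  shows "K x \<le> K y + ereal (inner (y - x) (\<mu> + \<alpha> *\<^sub>R x))"
proof (cases "K y")
  case (real b)
  define d where "d = y - x"
  define c where "c = b - a + inner d (\<mu> + \<alpha> *\<^sub>R x)"
  define k where "k = \<alpha> / 2 * (norm d)\<^sup>2"
  have "0 \<le> c + t * k" if t: "0 < t" "t \<le> 1" for t
  proof -
    define y_t where "y_t = x + t *\<^sub>R d"
    have "y_t = (1 - t) *\<^sub>R x + t *\<^sub>R y"
      by (simp add: y_t_def d_def algebra_simps)
    then have "K y_t \<le> ereal (1 - t) * K x + ereal t * K y"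
      using K_convex t unfolding convex_fun_def by simp
    then have K_y_t: "K y_t \<le> ereal ((1 - t) * a + t * b)"
      by (simp add: Kx real)
    have "ereal (a + (inner x \<mu> + \<alpha> / 2 * (norm x)\<^sup>2))
        = K x + ereal (inner x \<mu> + \<alpha> / 2 * (norm x)\<^sup>2)" by (simp add: Kx)
    also have "\<dots> \<le> K y_t + ereal (inner y_t \<mu> + \<alpha> / 2 * (norm y_t)\<^sup>2)" by (rule x_min)
    also have "\<dots> \<le> ereal ((1 - t) * a + t * b) + ereal (inner y_t \<mu> + \<alpha> / 2 * (norm y_t)\<^sup>2)"
      using K_y_t by (rule add_right_mono)
    finally have ineq: "a + (inner x \<mu> + \<alpha> / 2 * (norm x)\<^sup>2)
        \<le> (1 - t) * a + t * b + (inner y_t \<mu> + \<alpha> / 2 * (norm y_t)\<^sup>2)"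
      by simp
    have "(norm y_t)\<^sup>2 = (norm x)\<^sup>2 + 2 * t * inner x d + t\<^sup>2 * (norm d)\<^sup>2"
      unfolding y_t_def power2_norm_eq_inner
      by (simp add: inner_add_left inner_add_right inner_commute power2_eq_square)
    then have "t * (c + t * k) = (1 - t) * a + t * b + (inner y_t \<mu> + \<alpha> / 2 * (norm y_t)\<^sup>2)
        - (a + (inner x \<mu> + \<alpha> / 2 * (norm x)\<^sup>2))"
      using inner_commute[of d x]
      by (simp add: c_def k_def y_t_def inner_add_left inner_add_right algebra_simps power2_eq_square)
    with ineq have "0 \<le> t * (c + t * k)" by linarith
    then show ?thesis using t by (simp add: zero_le_mult_iff)
  qed
  then have "0 \<le> c" by (rule nonneg_if_nonneg_plus_small_multiples)
  then have "a \<le> b + inner (y - x) (\<mu> + \<alpha> *\<^sub>R x)" unfolding c_def d_def by linarith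
  then show ?thesis by (simp add: Kx real)
qed (use K_not_MInf in auto)

lemma prox_minimizer_minimizes_lagrangian:
  fixes K :: "'a::euclidean_space \<Rightarrow> ereal"
  assumes M: "subspace M" and \<alpha>: "0 \<le> \<alpha>" and K_convex: "convex_fun K"
    and K_not_MInf: "\<And>y. K y \<noteq> -\<infinity>" and Kx_finite: "K x \<noteq> \<infinity>"
    and x_min: "\<And>y. K x + ereal (inner x \<mu> + \<alpha> / 2 * (norm x)\<^sup>2)
                    \<le> K y + ereal (inner y \<mu> + \<alpha> / 2 * (norm y)\<^sup>2)"
  shows "lagrangian K \<alpha> M (\<mu> + \<alpha> *\<^sub>R orth_proj (orth_comp M) x) x
       \<le> lagrangian K \<alpha> M (\<mu> + \<alpha> *\<^sub>R orth_proj (orth_comp M) x) y"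
proof (cases "K y")
  case (real b)
  let ?P = "orth_proj M" and ?\<nu> = "\<mu> + \<alpha> *\<^sub>R orth_proj (orth_comp M) x"
  obtain a where Kx: "K x = ereal a" using Kx_finite K_not_MInf[of x] by (cases "K x") auto
  have "K x \<le> K y + ereal (inner (y - x) (\<mu> + \<alpha> *\<^sub>R x))"
    using K_convex Kx K_not_MInf x_min by (rule prox_minimizer_variational_ineq)
  then have variational: "a \<le> b + inner (y - x) (\<mu> + \<alpha> *\<^sub>R x)"
    by (simp add: Kx real)
  have "?P y - ?P x = ?P (y - x)" by (simp add: linear_diff[OF linear_orth_proj[OF M]])
  then have "(norm (?P x))\<^sup>2 + 2 * inner (?P x) (y - x) \<le> (norm (?P y))\<^sup>2"
    using power2_norm_ge_tangent[of "?P x" "?P y"] by (simp add: inner_orth_proj_orth_proj[OF M])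
  then have "\<alpha> / 2 * ((norm (?P x))\<^sup>2 + 2 * inner (?P x) (y - x)) \<le> \<alpha> / 2 * (norm (?P y))\<^sup>2"
    using \<alpha> by (intro mult_left_mono) auto
  then have tangent: "\<alpha> / 2 * (norm (?P x))\<^sup>2 + \<alpha> * inner (?P x) (y - x) \<le> \<alpha> / 2 * (norm (?P y))\<^sup>2"
    by (simp add: distrib_left)
  \<comment> \<open>Passing from the multiplier \<open>\<mu> + \<alpha> x\<close> of the variational inequality to \<open>\<nu>\<close> costs
    \<open>\<alpha> <P_M x, y - x>\<close>, which the tangent inequality for \<open>|P_M -|^2\<close> pays for.\<close>
  have "inner y ?\<nu> = inner x ?\<nu> + inner (y - x) (\<mu> + \<alpha> *\<^sub>R x) - \<alpha> * inner (?P x) (y - x)"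
    by (simp add: orth_proj_orth_comp[OF M] inner_diff_left inner_diff_right inner_add_right
        inner_commute algebra_simps)
  with variational tangent show ?thesis
    by (simp add: lagrangian_def Kx real)
qed (use K_not_MInf in \<open>auto simp: lagrangian_def\<close>)

locale augmented_dual_ascent =
  fixes K :: "'a::euclidean_space \<Rightarrow> ereal" and M :: "'a set" and \<alpha> :: real
    and x \<Lambda> :: "nat \<Rightarrow> 'a"
  assumes M_subspace: "subspace M" and \<alpha>_pos: "\<alpha> > 0"
    and K_convex: "convex_fun K" and K_proper: "proper_fun K"
    and \<Lambda>_0: "\<Lambda> 0 = 0"
    and x_argmin: "\<And>n y. K (x (Suc n)) + ereal (inner (x (Suc n)) (\<Lambda> n) + \<alpha> / 2 * (norm (x (Suc n)))\<^sup>2)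
                          \<le> K y + ereal (inner y (\<Lambda> n) + \<alpha> / 2 * (norm y)\<^sup>2)"
    and \<Lambda>_Suc: "\<And>n. \<Lambda> (Suc n) = \<Lambda> n + \<alpha> *\<^sub>R orth_proj (orth_comp M) (x (Suc n))"
begin

lemma K_not_MInf: "K y \<noteq> -\<infinity>"
  using K_proper unfolding proper_fun_def by blast

lemma K_iterate_finite: "K (x (Suc n)) \<noteq> \<infinity>"
proof
  assume K_inf: "K (x (Suc n)) = \<infinity>"
  obtain y where "K y \<noteq> \<infinity>" using K_proper unfolding proper_fun_def by blast
  with x_argmin[of n y] K_not_MInf[of y] show False
    by (cases "K y") (simp_all add: K_inf)
qed

lemma multiplier_in_orth_comp: "\<Lambda> n \<in> orth_comp M"
proof (induction n)
  case (Suc n)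
  then show ?case
    unfolding \<Lambda>_Suc
    by (intro subspace_add[OF subspace_orth_comp] subspace_scale[OF subspace_orth_comp]
        orth_proj_in[OF subspace_orth_comp])
qed (simp add: \<Lambda>_0 subspace_0[OF subspace_orth_comp])

lemma iterate_minimizes_lagrangian:
  "lagrangian K \<alpha> M (\<Lambda> (Suc n)) (x (Suc n)) \<le> lagrangian K \<alpha> M (\<Lambda> (Suc n)) y"
  unfolding \<Lambda>_Suc using M_subspace less_imp_le[OF \<alpha>_pos] K_convex K_not_MInf K_iterate_finite x_argmin
  by (rule prox_minimizer_minimizes_lagrangian)

lemma dual_h_multiplier_eq_lagrangian:
  "dual_h K \<alpha> M (\<Lambda> (Suc n)) = lagrangian K \<alpha> M (\<Lambda> (Suc n)) (x (Suc n))"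
proof -
  have "orth_proj (orth_comp M) (\<Lambda> (Suc n)) = \<Lambda> (Suc n)"
    by (rule orth_proj_id[OF subspace_orth_comp multiplier_in_orth_comp])
  then show ?thesis
    unfolding dual_h_eq_INF_lagrangian
    by (simp add: antisym INF_lower INF_greatest iterate_minimizes_lagrangian)
qed

lemma multiplier_dist_decreasing:
  assumes max: "\<And>\<Lambda>'. dual_h K \<alpha> M \<Lambda>' \<le> dual_h K \<alpha> M \<Lambda>\<^sub>0"
  defines "L \<equiv> orth_proj (orth_comp M) \<Lambda>\<^sub>0"
  shows "norm (\<Lambda> (Suc n) - L) \<le> norm (\<Lambda> n - L)"
proof -
  let ?Q = "orth_proj (orth_comp M)" and ?z = "x (Suc n)"
  have "lagrangian K \<alpha> M (\<Lambda> (Suc n)) ?z = dual_h K \<alpha> M (\<Lambda> (Suc n))"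
    by (rule dual_h_multiplier_eq_lagrangian[symmetric])
  also have "\<dots> \<le> dual_h K \<alpha> M \<Lambda>\<^sub>0" by (rule max)
  also have "\<dots> \<le> lagrangian K \<alpha> M L ?z"
    unfolding dual_h_eq_INF_lagrangian L_def by (rule INF_lower) simp
  finally have "inner ?z (\<Lambda> (Suc n)) \<le> inner ?z L"
    using K_iterate_finite K_not_MInf by (cases "K ?z") (simp_all add: lagrangian_def)
  moreover have diff_orth: "L - \<Lambda> (Suc n) \<in> orth_comp M"
    unfolding L_def
    by (intro subspace_diff[OF subspace_orth_comp] orth_proj_in[OF subspace_orth_comp]
        multiplier_in_orth_comp)
  then have "inner (?Q ?z) (L - \<Lambda> (Suc n)) = inner ?z (L - \<Lambda> (Suc n))"
    using orth_proj_orthogonal[OF subspace_orth_comp diff_orth, of ?z] by (simp add: inner_diff_left)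
  moreover have "\<Lambda> (Suc n) - \<Lambda> n = \<alpha> *\<^sub>R ?Q ?z" by (simp add: \<Lambda>_Suc)
  then have "inner (\<Lambda> (Suc n) - \<Lambda> n) (\<Lambda> (Suc n) - L) = - (\<alpha> * inner (?Q ?z) (L - \<Lambda> (Suc n)))"
    by (simp add: inner_diff_right algebra_simps)
  ultimately have "inner (\<Lambda> (Suc n) - \<Lambda> n) (\<Lambda> (Suc n) - L) \<le> 0"
    using \<alpha>_pos by (simp add: inner_diff_right)
  then show ?thesis by (rule norm_diff_le_if_inner_nonpos)
qed

lemma bounded_multipliers:
  assumes max: "\<And>\<Lambda>'. dual_h K \<alpha> M \<Lambda>' \<le> dual_h K \<alpha> M \<Lambda>\<^sub>0"
  shows "bounded (range \<Lambda>)"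
proof -
  define L where "L = orth_proj (orth_comp M) \<Lambda>\<^sub>0"
  have dist_bound: "norm (\<Lambda> n - L) \<le> norm L" for n
  proof (induction n)
    case (Suc n)
    then show ?case using multiplier_dist_decreasing[OF max, of n] unfolding L_def by linarith
  qed (simp add: \<Lambda>_0)
  have "norm (\<Lambda> n) \<le> 2 * norm L" for n
    using norm_triangle_ineq[of "\<Lambda> n - L" L] dist_bound[of n] by simp
  then show ?thesis unfolding bounded_iff by blast
qed

end

theorem corollary1:
  fixes K :: "'a::euclidean_space \<Rightarrow> ereal"
    and M :: "'a set"
    and \<alpha> :: real
    and x \<Lambda> :: "nat \<Rightarrow> 'a"
  assumes "subspace M"
    and "\<alpha> > 0"
    and "convex_fun K"
    and "feasible K"
    and "\<Lambda> 0 = 0"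
    and "\<And>n y. K (x (Suc n)) + ereal (inner (x (Suc n)) (\<Lambda> n) + \<alpha> / 2 * (norm (x (Suc n)))\<^sup>2)
                 \<le> K y + ereal (inner y (\<Lambda> n) + \<alpha> / 2 * (norm y)\<^sup>2)"
    and "\<And>n. \<Lambda> (Suc n) = \<Lambda> n + \<alpha> *\<^sub>R orth_proj (orth_comp M) (x (Suc n))"
  shows "((\<exists>\<Lambda>0. \<forall>\<Lambda>'. dual_h K \<alpha> M \<Lambda>' \<le> dual_h K \<alpha> M \<Lambda>0)
            \<longrightarrow> bounded (range (\<lambda>n. \<Lambda> (Suc n))))
       \<and> ((\<forall>z. K z \<noteq> \<infinity>)
            \<longrightarrow> (\<exists>\<Lambda>0. \<forall>\<Lambda>'. dual_h K \<alpha> M \<Lambda>' \<le> dual_h K \<alpha> M \<Lambda>0)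
                \<and> bounded (range (\<lambda>n. \<Lambda> (Suc n))))"
proof -
  have K_proper: "proper_fun K" and K_bounded_below: "bounded_below_fun K"
    using assms(4) unfolding feasible_def by auto
  interpret augmented_dual_ascent K M \<alpha> x \<Lambda>
    using assms(1-3) K_proper assms(5-7) by unfold_locales
  have "range (\<lambda>n. \<Lambda> (Suc n)) \<subseteq> range \<Lambda>" by auto
  then have bounded_if_max: "(\<exists>\<Lambda>0. \<forall>\<Lambda>'. dual_h K \<alpha> M \<Lambda>' \<le> dual_h K \<alpha> M \<Lambda>0)
      \<longrightarrow> bounded (range (\<lambda>n. \<Lambda> (Suc n)))"
    using bounded_multipliers bounded_subset by blast
  have "\<bar>K z\<bar> \<noteq> \<infinity>" if "\<forall>z. K z \<noteq> \<infinity>" for z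
    using that K_not_MInf[of z] by (cases "K z") auto
  then have "(\<forall>z. K z \<noteq> \<infinity>) \<longrightarrow> (\<exists>\<Lambda>0. \<forall>\<Lambda>'. dual_h K \<alpha> M \<Lambda>' \<le> dual_h K \<alpha> M \<Lambda>0)"
    using dual_h_attains_max[OF assms(1) _ assms(3) K_bounded_below] assms(2) by auto
  with bounded_if_max show ?thesis by blast
qed

end
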